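(* Let $(X,d)$ be a proper metric space, let $\sigma$ be a conical bicombing on $X$, and let $x,y\in X$. Then for each integer $n\ge1$ there exist unique points $\sigma_{xy}(n;i)$, $i=0,\dots,n$, such that $\sigma_{xy}(n;0)=x$, $\sigma_{xy}(n;n)=y$, and \[ \sigma_{xy}(n;i)=\sigma\big(\sigma_{xy}(n;i-1),\sigma_{xy}(n;i+1),\tfrac12\big) \] for all $1\le i\le n-1$. Moreover, the map $\sigma^{(n)}\colon X\times X\times[0,1]\to X$ given by \[ \sigma^{(n)}\big(x,y,(1-\lambda)\tfrac{i}{n}+\lambda\tfrac{i+1}{n}\big):=\sigma\big(\sigma_{xy}(n;i),\sigma_{xy}(n;i+1),\lambda\big) \] for all $x,y\in X$, $\lambda\in[0,1]$ and $0\le i\le n-1$, is a conical bicombing.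
   Context: A bicombing on $(X,d)$ is a map $\sigma\colon X\times X\times[0,1]\to X$ such that each $\sigma_{xy}:=\sigma(x,y,\cdot)$ is a geodesic from $x$ to $y$ ($\sigma_{xy}(0)=x$, $\sigma_{xy}(1)=y$, $d(\sigma_{xy}(s),\sigma_{xy}(t))=|s-t|d(x,y)$); it is conical if $d(\sigma_{xy}(t),\sigma_{x'y'}(t))\le(1-t)d(x,x')+t\,d(y,y')$ for all $x,y,x',y'\in X$, $t\in[0,1]$. A metric space is proper if closed bounded sets are compact. *)

theory Defs
  imports "HOL-Analysis.Analysis"
begin

definition proper_metric :: "'a::metric_space itself \<Rightarrow> bool" where
  "proper_metric _ \<longleftrightarrow> (\<forall>S::'a set. closed S \<and> bounded S \<longrightarrow> compact S)"

definition geodesic01 :: "(real \<Rightarrow> 'a::metric_space) \<Rightarrow> 'a \<Rightarrow> 'a \<Rightarrow> bool" where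
  "geodesic01 g x y \<longleftrightarrow> g 0 = x \<and> g 1 = y \<and>
     (\<forall>s\<in>{0..1}. \<forall>t\<in>{0..1}. dist (g s) (g t) = \<bar>s - t\<bar> * dist x y)"

definition bicombing :: "('a::metric_space \<Rightarrow> 'a \<Rightarrow> real \<Rightarrow> 'a) \<Rightarrow> bool" where
  "bicombing \<sigma> \<longleftrightarrow> (\<forall>x y. geodesic01 (\<sigma> x y) x y)"

definition conical_bicombing :: "('a::metric_space \<Rightarrow> 'a \<Rightarrow> real \<Rightarrow> 'a) \<Rightarrow> bool" where
  "conical_bicombing \<sigma> \<longleftrightarrow> bicombing \<sigma> \<and>
     (\<forall>x y x' y'. \<forall>t\<in>{0..1}.
        dist (\<sigma> x y t) (\<sigma> x' y' t) \<le> (1 - t) * dist x x' + t * dist y y')"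

definition midpoint_chain :: "('a \<Rightarrow> 'a \<Rightarrow> real \<Rightarrow> 'a) \<Rightarrow> nat \<Rightarrow> 'a \<Rightarrow> 'a \<Rightarrow> 'a list \<Rightarrow> bool" where
  "midpoint_chain \<sigma> n x y p \<longleftrightarrow> length p = n + 1 \<and> p ! 0 = x \<and> p ! n = y \<and>
     (\<forall>i. 1 \<le> i \<and> i \<le> n - 1 \<longrightarrow> p ! i = \<sigma> (p ! (i - 1)) (p ! (i + 1)) (1/2))"

end

theory Submission
  imports Defs
begin

text \<open>For two midpoint chains \<open>p\<close> and \<open>q\<close> the conical inequality makes
  \<open>k \<mapsto> d(p\<^sub>k, q\<^sub>k)\<close> discretely convex, so by the maximum principle it stays below the
  linear interpolation of its values at \<open>0\<close> and \<open>n\<close>. This gives uniqueness, and comparison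
  with the constant chain shows that consecutive points of a chain are exactly \<open>d(x, y)/n\<close> apart.
  For existence, replacing every interior point by the midpoint of its neighbours contracts the
  weighted distance \<open>max\<^sub>i d(P\<^sub>i, Q\<^sub>i) / (i (n - i))\<close> by the factor \<open>1 - 1/n\<^sup>2\<close>, so the
  iterates converge in the complete (because proper) space, and the limit is a chain.
  Concatenating the \<open>\<sigma>\<close>-geodesics between consecutive chain points gives the subdivided
  bicombing: it is \<open>d(x, y)\<close>-Lipschitz with the right endpoints, hence a geodesic, and on each
  segment the conical inequality for \<open>\<sigma>\<close> combines with the comparison of chains.\<close>

lemma discrete_maximum_principle:
  fixes u :: "nat \<Rightarrow> real"
  assumes "u 0 \<le> 0" "u n \<le> 0"
    and convex: "\<And>i. 0 < i \<Longrightarrow> i < n \<Longrightarrow> 2 * u i \<le> u (i - 1) + u (i + 1)"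
    and "j \<le> n"
  shows "u j \<le> 0"
proof (rule ccontr)
  assume "\<not> u j \<le> 0"
  define m where "m = Max (u ` {0..n})"
  have le_m: "u k \<le> m" if "k \<le> n" for k
    unfolding m_def using that by (intro Max_ge) auto
  have "m \<in> u ` {0..n}"
    unfolding m_def by (intro Max_in) auto
  then have ex_max: "\<exists>k. k \<le> n \<and> u k = m"
    by auto
  define i where "i = (LEAST k. k \<le> n \<and> u k = m)"
  have i: "i \<le> n" "u i = m"
    using LeastI_ex[OF ex_max] unfolding i_def by auto
  have before_i: "u k < m" if "k < i" for k
    using not_less_Least[of k "\<lambda>k. k \<le> n \<and> u k = m"] le_m[of k] that i(1)
    unfolding i_def by fastforce
  have "m > 0"
    using le_m[OF \<open>j \<le> n\<close>] \<open>\<not> u j \<le> 0\<close> by simp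
  then have "i \<noteq> 0" "i \<noteq> n"
    using i(2) assms(1,2) by (metis leD)+
  then have "0 < i" "i < n"
    using i(1) by auto
  then show False
    using convex[of i] before_i[of "i - 1"] le_m[of "i + 1"] i by simp
qed

lemma dist_le_sum_dist_Suc:
  fixes f :: "nat \<Rightarrow> 'a::metric_space"
  assumes "m \<le> n"
  shows "dist (f m) (f n) \<le> (\<Sum>k = m..<n. dist (f k) (f (Suc k)))"
  using assms
proof (induction n rule: dec_induct)
  case (step n)
  have "dist (f m) (f (Suc n)) \<le> dist (f m) (f n) + dist (f n) (f (Suc n))"
    by (rule dist_triangle)
  with step.IH step.hyps show ?case by simp
qed simp

lemma Cauchy_if_dist_Suc_le_geometric:
  fixes f :: "nat \<Rightarrow> 'a::metric_space"
  assumes c: "0 \<le> c" "c < 1" and step: "\<And>k. dist (f k) (f (Suc k)) \<le> K * c ^ k"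
  shows "Cauchy f"
proof -
  have tail: "dist (f m) (f n) \<le> K * c ^ m / (1 - c)" if "m \<le> n" for m n
  proof -
    have "K \<ge> 0" using order.trans[OF zero_le_dist step[of 0]] by simp
    have "dist (f m) (f n) \<le> (\<Sum>k = m..<n. K * c ^ k)"
      using dist_le_sum_dist_Suc[OF that] by (rule order.trans) (intro sum_mono step)
    also have "\<dots> = K * c ^ m * (\<Sum>k<n - m. c ^ k)"
      by (simp add: sum.atLeastLessThan_shift_0[of _ m n] sum_distrib_left power_add
          atLeast0LessThan mult.assoc)
    also have "\<dots> = K * c ^ m * ((1 - c ^ (n - m)) / (1 - c))"
      using c by (simp add: sum_gp_strict)
    also have "\<dots> \<le> K * c ^ m / (1 - c)"
      using c \<open>K \<ge> 0\<close> by (simp add: divide_right_mono mult_left_le)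
    finally show ?thesis .
  qed
  have "(\<lambda>m. K * c ^ m / (1 - c)) \<longlonglongrightarrow> 0"
    using c by (intro tendsto_divide_zero tendsto_mult_right_zero LIMSEQ_power_zero) auto
  show ?thesis
    unfolding Cauchy_altdef2
  proof (intro allI impI)
    fix e :: real
    assume "e > 0"
    have "\<forall>\<^sub>F m in sequentially. K * c ^ m / (1 - c) < e"
      using order_tendstoD(2)[OF \<open>(\<lambda>m. K * c ^ m / (1 - c)) \<longlonglongrightarrow> 0\<close> \<open>e > 0\<close>] .
    then obtain N where N: "K * c ^ N / (1 - c) < e"
      unfolding eventually_sequentially by blast
    have "dist (f n) (f N) < e" if "n \<ge> N" for n
      using order_le_less_trans[OF tail[OF that] N] by (simp add: dist_commute)
    then show "\<exists>N. \<forall>n\<ge>N. dist (f n) (f N) < e" by blast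
  qed
qed

lemma proper_metric_Cauchy_convergent:
  fixes f :: "nat \<Rightarrow> 'a::metric_space"
  assumes "proper_metric TYPE('a)" and "Cauchy f"
  shows "convergent f"
proof -
  have "bounded (closure (range f))"
    using assms(2) by (intro bounded_closure cauchy_imp_bounded)
  then have "compact (closure (range f))"
    using assms(1) unfolding proper_metric_def by simp
  then have "complete (closure (range f))"
    by (rule compact_imp_complete)
  then show ?thesis
    using assms(2) closure_subset unfolding convergent_def by (metis completeE range_subsetD)
qed

lemma lipschitz_on_subdivision:
  fixes a :: "nat \<Rightarrow> real"
  assumes "0 \<le> L" and pieces: "\<And>k. k < n \<Longrightarrow> L-lipschitz_on {a k..a (Suc k)} f"
  shows "L-lipschitz_on {a 0..a n} f"
  using pieces
proof (induction n)
  case 0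
  show ?case using \<open>0 \<le> L\<close> by (intro lipschitz_onI) auto
next
  case (Suc n)
  have "L-lipschitz_on {a 0..a (Suc n)} (\<lambda>t. if t \<le> a n then f t else f t)"
    using Suc by (intro lipschitz_on_concat) auto
  then show ?case by simp
qed

lemma geodesic01_if_lipschitz:
  assumes "g 0 = x" "g 1 = y" and lip: "(dist x y)-lipschitz_on {0..1} g"
  shows "geodesic01 g x y"
proof -
  have ordered: "dist (g s) (g t) = (t - s) * dist x y" if "0 \<le> s" "s \<le> t" "t \<le> 1" for s t
  proof (rule antisym)
    show "dist (g s) (g t) \<le> (t - s) * dist x y"
      using lipschitz_onD[OF lip, of s t] that by (simp add: dist_real_def mult.commute)
    have "dist x y \<le> dist (g 0) (g s) + dist (g s) (g t) + dist (g t) (g 1)"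
      using assms(1,2) dist_triangle[of x y "g s"] dist_triangle[of "g s" y "g t"] by simp
    moreover have "dist (g 0) (g s) \<le> s * dist x y" "dist (g t) (g 1) \<le> (1 - t) * dist x y"
      using lipschitz_onD[OF lip, of 0 s] lipschitz_onD[OF lip, of t 1] that
      by (simp_all add: dist_real_def mult.commute)
    ultimately show "(t - s) * dist x y \<le> dist (g s) (g t)"
      by (simp add: algebra_simps)
  qed
  show ?thesis
    unfolding geodesic01_def
  proof (intro conjI ballI assms(1,2))
    fix s t :: real
    assume "s \<in> {0..1}" "t \<in> {0..1}"
    then show "dist (g s) (g t) = \<bar>s - t\<bar> * dist x y"
      using ordered[of s t] ordered[of t s] by (cases "s \<le> t") (auto simp: dist_commute)
  qed
qed

lemma unit_interval_segment:
  fixes t :: real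
  assumes "0 < n" "t \<in> {0..1}"
  obtains i l where "i < n" "l \<in> {0..1}" "t = (real i + l) / real n"
proof -
  define i where "i = min (n - 1) (nat \<lfloor>t * n\<rfloor>)"
  have "0 \<le> t * n" "t * n \<le> n"
    using assms by (auto simp: mult_left_le_one_le)
  then have "real (nat \<lfloor>t * n\<rfloor>) \<le> t * n" "t * n < real (nat \<lfloor>t * n\<rfloor>) + 1"
    by linarith+
  then have "real i \<le> t * n" "t * n \<le> real i + 1"
    using \<open>t * n \<le> n\<close> unfolding i_def by (auto simp: min_def of_nat_diff)
  moreover have "i < n"
    using assms unfolding i_def by simp
  ultimately show thesis
    using assms by (intro that[of i "t * n - i"]) (auto simp: field_simps)
qed

lemma interpolate_grid_points:
  "(1 - l) * (real i / n) + l * (real (i + 1) / n) = (real i + l) / n"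
  by (simp add: add_divide_distrib diff_divide_distrib algebra_simps)

lemma midpoint_chainD:
  assumes "midpoint_chain \<sigma> n x y p"
  shows "length p = n + 1" "p ! 0 = x" "p ! n = y"
    and "0 < i \<Longrightarrow> i < n \<Longrightarrow> p ! i = \<sigma> (p ! (i - 1)) (p ! (i + 1)) (1/2)"
  using assms unfolding midpoint_chain_def by auto

section \<open>Midpoint chains of a conical bicombing\<close>

locale conical_bicombing_space =
  fixes \<sigma> :: "'a::metric_space \<Rightarrow> 'a \<Rightarrow> real \<Rightarrow> 'a"
  assumes conical_bicombing: "conical_bicombing \<sigma>"
begin

lemma start_point [simp]: "\<sigma> x y 0 = x"
  and end_point [simp]: "\<sigma> x y 1 = y"
  using conical_bicombing
  unfolding conical_bicombing_def bicombing_def geodesic01_def by auto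

lemma dist_along:
  assumes "s \<in> {0..1}" "t \<in> {0..1}"
  shows "dist (\<sigma> x y s) (\<sigma> x y t) = \<bar>s - t\<bar> * dist x y"
  using conical_bicombing assms
  unfolding conical_bicombing_def bicombing_def geodesic01_def by auto

lemma conical:
  assumes "t \<in> {0..1}"
  shows "dist (\<sigma> x y t) (\<sigma> x' y' t) \<le> (1 - t) * dist x x' + t * dist y y'"
  using conical_bicombing assms unfolding conical_bicombing_def by auto

lemma constant_path [simp]:
  assumes "t \<in> {0..1}"
  shows "\<sigma> x x t = x"
  using dist_along[OF assms, of 0 x x] by simp

lemma dist_midpoint_eq: "dist a (\<sigma> a b (1/2)) = dist (\<sigma> a b (1/2)) b"
  using dist_along[of 0 "1/2" a b] dist_along[of "1/2" 1 a b] by simp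

lemma tendsto_bicombing:
  assumes "(f \<longlongrightarrow> a) F" "(g \<longlongrightarrow> b) F" "t \<in> {0..1}"
  shows "((\<lambda>k. \<sigma> (f k) (g k) t) \<longlongrightarrow> \<sigma> a b t) F"
proof -
  have "\<forall>\<^sub>F k in F. norm (dist (\<sigma> (f k) (g k) t) (\<sigma> a b t))
      \<le> (1 - t) * dist (f k) a + t * dist (g k) b"
    using conical[OF assms(3)] by (intro always_eventually allI) simp
  moreover have "((\<lambda>k. (1 - t) * dist (f k) a + t * dist (g k) b) \<longlongrightarrow> 0) F"
    using assms(1,2)[THEN tendsto_dist_iff[THEN iffD1]]
    by (intro tendsto_add_zero tendsto_mult_right_zero)
  ultimately have "((\<lambda>k. dist (\<sigma> (f k) (g k) t) (\<sigma> a b t)) \<longlongrightarrow> 0) F"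
    by (rule Lim_null_comparison)
  then show ?thesis
    by (rule tendsto_dist_iff[THEN iffD2])
qed

lemma midpoint_chain_replicate: "midpoint_chain \<sigma> n x x (replicate (n + 1) x)"
  unfolding midpoint_chain_def by (auto simp del: replicate_Suc)

lemma midpoint_chain_dist_le:
  assumes p: "midpoint_chain \<sigma> n x y p" and q: "midpoint_chain \<sigma> n x' y' q" and "j \<le> n"
  shows "dist (p ! j) (q ! j) \<le> (1 - j / n) * dist x x' + (j / n) * dist y y'"
proof -
  define h where "h k = (1 - k / n) * dist x x' + (k / n) * dist y y'" for k :: nat
  define u where "u k = dist (p ! k) (q ! k) - h k" for k
  have "u j \<le> 0"
  proof (rule discrete_maximum_principle[OF _ _ _ \<open>j \<le> n\<close>])
    show "u 0 \<le> 0"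
      using midpoint_chainD(2)[OF p] midpoint_chainD(2)[OF q] by (simp add: u_def h_def)
    show "u n \<le> 0"
      using midpoint_chainD(2,3)[OF p] midpoint_chainD(2,3)[OF q]
      by (cases "n = 0") (simp_all add: u_def h_def)
    fix k
    assume k: "0 < k" "k < n"
    have "dist (p ! k) (q ! k)
        \<le> (1 - 1/2) * dist (p ! (k - 1)) (q ! (k - 1)) + 1/2 * dist (p ! (k + 1)) (q ! (k + 1))"
      using midpoint_chainD(4)[OF p k] midpoint_chainD(4)[OF q k] conical[of "1/2"] by simp
    moreover have "h (k - 1) + h (k + 1) = 2 * h k"
      using k unfolding h_def by (simp add: of_nat_diff field_simps)
    ultimately show "2 * u k \<le> u (k - 1) + u (k + 1)"
      unfolding u_def by simp
  qed
  then show ?thesis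
    unfolding u_def h_def by simp
qed

lemma midpoint_chain_unique:
  assumes "midpoint_chain \<sigma> n x y p" "midpoint_chain \<sigma> n x y q"
  shows "p = q"
proof (rule nth_equalityI)
  show "length p = length q"
    using assms by (simp add: midpoint_chainD(1))
  fix i
  assume "i < length p"
  then show "p ! i = q ! i"
    using midpoint_chain_dist_le[OF assms, of i] midpoint_chainD(1)[OF assms(1)] by simp
qed

lemma midpoint_chain_steps_eq:
  assumes p: "midpoint_chain \<sigma> n x y p" and "i < n"
  shows "dist (p ! i) (p ! (i + 1)) = dist x (p ! 1)"
  using \<open>i < n\<close>
proof (induction i)
  case (Suc i)
  have "p ! (i + 1) = \<sigma> (p ! i) (p ! (i + 2)) (1/2)"
    using midpoint_chainD(4)[OF p, of "i + 1"] Suc.prems by simp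
  then have "dist (p ! i) (p ! (i + 1)) = dist (p ! (i + 1)) (p ! (i + 2))"
    by (simp add: dist_midpoint_eq)
  with Suc show ?case by simp
qed (simp add: midpoint_chainD(2)[OF p])

text \<open>Comparing with the constant chain from \<open>x\<close> to \<open>x\<close> bounds the first step by
  \<open>d(x, y) / n\<close>; the triangle inequality along the chain gives the reverse bound.\<close>
lemma midpoint_chain_step_dist:
  assumes p: "midpoint_chain \<sigma> n x y p" and "i < n"
  shows "dist (p ! i) (p ! (i + 1)) = dist x y / n"
proof -
  define \<delta> where "\<delta> = dist x (p ! 1)"
  have "dist x y \<le> (\<Sum>k = 0..<n. dist (p ! k) (p ! Suc k))"
    using dist_le_sum_dist_Suc[of 0 n "(!) p"] midpoint_chainD(2,3)[OF p] by simp
  also have "\<dots> = n * \<delta>"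
    using midpoint_chain_steps_eq[OF p] unfolding \<delta>_def by simp
  finally have "dist x y \<le> n * \<delta>" .
  moreover have "\<delta> \<le> dist x y / n"
    using midpoint_chain_dist_le[OF p midpoint_chain_replicate[of n x], of 1] \<open>i < n\<close>
    unfolding \<delta>_def by (simp add: dist_commute)
  ultimately have "\<delta> = dist x y / n"
    using \<open>i < n\<close> by (simp add: field_simps)
  then show ?thesis
    using midpoint_chain_steps_eq[OF p \<open>i < n\<close>] unfolding \<delta>_def by simp
qed

end

section \<open>Existence of midpoint chains\<close>

definition midpoint_relaxation ::
    "('a \<Rightarrow> 'a \<Rightarrow> real \<Rightarrow> 'a) \<Rightarrow> nat \<Rightarrow> 'a \<Rightarrow> 'a \<Rightarrow> (nat \<Rightarrow> 'a) \<Rightarrow> nat \<Rightarrow> 'a" where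
  "midpoint_relaxation \<sigma> n x y P i =
     (if i = 0 then x else if n \<le> i then y else \<sigma> (P (i - 1)) (P (i + 1)) (1/2))"

context conical_bicombing_space
begin

text \<open>Measured against the weights \<open>i (n - i)\<close>, which satisfy
  \<open>(w (i - 1) + w (i + 1)) / 2 = w i - 1\<close>, the relaxation contracts by \<open>1 - 1/n\<^sup>2\<close>.\<close>
lemma midpoint_relaxation_contraction:
  assumes "0 \<le> K" and PQ: "\<And>j. j \<le> n \<Longrightarrow> dist (P j) (Q j) \<le> K * (real j * (real n - real j))"
    and "i \<le> n"
  shows "dist (midpoint_relaxation \<sigma> n x y P i) (midpoint_relaxation \<sigma> n x y Q i)
    \<le> (1 - 1 / (real n)\<^sup>2) * K * (real i * (real n - real i))"
proof (cases "0 < i \<and> i < n")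
  case True
  define w where "w j = real j * (real n - real j)" for j
  have "w i \<le> (real n)\<^sup>2"
    using \<open>i \<le> n\<close> unfolding w_def power2_eq_square by (intro mult_mono) auto
  then have "K * w i / (real n)\<^sup>2 \<le> K"
    using True \<open>0 \<le> K\<close> by (simp add: divide_le_eq mult_left_mono)
  have "dist (midpoint_relaxation \<sigma> n x y P i) (midpoint_relaxation \<sigma> n x y Q i)
      \<le> (1 - 1/2) * dist (P (i - 1)) (Q (i - 1)) + 1/2 * dist (P (i + 1)) (Q (i + 1))"
    using True conical[of "1/2"] by (simp add: midpoint_relaxation_def)
  also have "\<dots> \<le> (1 - 1/2) * (K * w (i - 1)) + 1/2 * (K * w (i + 1))"
    using True PQ[of "i - 1", folded w_def] PQ[of "i + 1", folded w_def]
    by (intro add_mono mult_left_mono) auto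
  also have "\<dots> = K * w i - K"
    using True unfolding w_def by (simp add: of_nat_diff algebra_simps)
  also have "\<dots> \<le> K * w i - K * w i / (real n)\<^sup>2"
    using \<open>K * w i / (real n)\<^sup>2 \<le> K\<close> by simp
  also have "\<dots> = (1 - 1 / (real n)\<^sup>2) * K * w i"
    by (simp add: algebra_simps)
  finally show ?thesis
    by (simp only: w_def)
next
  case False
  then have "i = 0 \<or> i = n"
    using \<open>i \<le> n\<close> by auto
  then show ?thesis
    by (auto simp: midpoint_relaxation_def)
qed

lemma midpoint_relaxation_iterates_dist:
  assumes "0 \<le> M"
    and base: "\<And>j. j \<le> n \<Longrightarrow>
      dist (midpoint_relaxation \<sigma> n x y P j) (P j) \<le> M * (real j * (real n - real j))"
    and "i \<le> n"
  shows "dist ((midpoint_relaxation \<sigma> n x y ^^ Suc k) P i) ((midpoint_relaxation \<sigma> n x y ^^ k) P i)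
    \<le> (1 - 1 / (real n)\<^sup>2) ^ k * M * (real i * (real n - real i))"
  using \<open>i \<le> n\<close>
proof (induction k arbitrary: i)
  case 0
  then show ?case using base by simp
next
  case (Suc k)
  have "0 \<le> 1 - 1 / (real n)\<^sup>2"
    by (cases n) (auto simp: field_simps)
  then show ?case
    using midpoint_relaxation_contraction[OF _ Suc.IH Suc.prems] \<open>0 \<le> M\<close>
    by (simp add: mult.assoc)
qed

lemma midpoint_relaxation_first_step:
  assumes "P 0 = x" "P n = y" "j \<le> n"
  shows "dist (midpoint_relaxation \<sigma> n x y P j) (P j)
    \<le> (\<Sum>i\<le>n. dist (midpoint_relaxation \<sigma> n x y P i) (P i)) * (real j * (real n - real j))"
    (is "?d j \<le> ?M * _")
proof (cases "0 < j \<and> j < n")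
  case True
  then have "real (Suc j) \<le> real n"
    by (simp only: of_nat_le_iff Suc_le_eq)
  then have "1 \<le> real j" "1 \<le> real n - real j"
    using True by auto
  then have "1 \<le> real j * (real n - real j)"
    using mult_mono[of 1 "real j" 1 "real n - real j"] by simp
  have "?d j \<le> ?M * 1"
    unfolding mult_1_right using \<open>j \<le> n\<close> by (intro member_le_sum) auto
  also have "\<dots> \<le> ?M * (real j * (real n - real j))"
    using \<open>1 \<le> real j * (real n - real j)\<close> by (intro mult_left_mono) (auto simp: sum_nonneg)
  finally show ?thesis .
next
  case False
  then have "j = 0 \<or> j = n"
    using \<open>j \<le> n\<close> by auto
  then show ?thesis
    using assms by (auto simp: midpoint_relaxation_def)
qed

lemma midpoint_relaxation_limit_chain:
  assumes "0 < n"
    and lim: "\<And>i. i \<le> n \<Longrightarrow> (\<lambda>k. (midpoint_relaxation \<sigma> n x y ^^ k) P i) \<longlonglongrightarrow> L i"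
  shows "midpoint_chain \<sigma> n x y (map L [0..<n + 1])"
proof -
  let ?P = "\<lambda>k. (midpoint_relaxation \<sigma> n x y ^^ k) P"
  have shifted: "(\<lambda>k. midpoint_relaxation \<sigma> n x y (?P k) i) \<longlonglongrightarrow> L i" if "i \<le> n" for i
    using LIMSEQ_Suc[OF lim[OF that]] by simp
  have "L 0 = x"
    using shifted[of 0] by (simp add: midpoint_relaxation_def LIMSEQ_const_iff)
  moreover have "L n = y"
    using shifted[of n] \<open>0 < n\<close> by (simp add: midpoint_relaxation_def LIMSEQ_const_iff)
  moreover have "L i = \<sigma> (L (i - 1)) (L (i + 1)) (1/2)" if "0 < i" "i < n" for i
  proof (rule LIMSEQ_unique[OF shifted])
    show "(\<lambda>k. midpoint_relaxation \<sigma> n x y (?P k) i) \<longlonglongrightarrow> \<sigma> (L (i - 1)) (L (i + 1)) (1/2)"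
      using that by (simp add: midpoint_relaxation_def tendsto_bicombing lim)
  qed (use that in simp)
  ultimately show ?thesis
    using \<open>0 < n\<close> unfolding midpoint_chain_def by (auto simp: nth_append simp del: upt_Suc)
qed

end

locale proper_conical_bicombing_space = conical_bicombing_space \<sigma>
  for \<sigma> :: "'a::metric_space \<Rightarrow> 'a \<Rightarrow> real \<Rightarrow> 'a" +
  assumes proper: "proper_metric TYPE('a)"
begin

lemma midpoint_relaxation_iterates_converge:
  assumes "0 < n" "P 0 = x" "P n = y"
  obtains L where "\<And>i. i \<le> n \<Longrightarrow> (\<lambda>k. (midpoint_relaxation \<sigma> n x y ^^ k) P i) \<longlonglongrightarrow> L i"
proof -
  let ?R = "midpoint_relaxation \<sigma> n x y"
  define M where "M = (\<Sum>j\<le>n. dist (?R P j) (P j))"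
  have "0 \<le> M"
    unfolding M_def by (simp add: sum_nonneg)
  have base: "dist (?R P j) (P j) \<le> M * (real j * (real n - real j))" if "j \<le> n" for j
    unfolding M_def using assms(2,3) that by (rule midpoint_relaxation_first_step)
  have "convergent (\<lambda>k. (?R ^^ k) P i)" if "i \<le> n" for i
  proof (rule proper_metric_Cauchy_convergent[OF proper])
    show "Cauchy (\<lambda>k. (?R ^^ k) P i)"
    proof (rule Cauchy_if_dist_Suc_le_geometric)
      show "0 \<le> 1 - 1 / (real n)\<^sup>2" "1 - 1 / (real n)\<^sup>2 < 1"
        using \<open>0 < n\<close> by (auto simp: field_simps)
      show "dist ((?R ^^ k) P i) ((?R ^^ Suc k) P i)
          \<le> M * (real i * (real n - real i)) * (1 - 1 / (real n)\<^sup>2) ^ k" for k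
        using midpoint_relaxation_iterates_dist[OF \<open>0 \<le> M\<close> base that, of k]
        by (simp add: dist_commute mult_ac)
    qed
  qed
  then show thesis
    using that unfolding convergent_def by metis
qed

lemma ex1_midpoint_chain:
  assumes "0 < n"
  shows "\<exists>!p. midpoint_chain \<sigma> n x y p"
proof -
  have "(\<lambda>i. if i = 0 then x else y) 0 = x" "(\<lambda>i. if i = 0 then x else y) n = y"
    using assms by auto
  then obtain L where "\<And>i. i \<le> n \<Longrightarrow>
      (\<lambda>k. (midpoint_relaxation \<sigma> n x y ^^ k) (\<lambda>i. if i = 0 then x else y) i) \<longlonglongrightarrow> L i"
    by (rule midpoint_relaxation_iterates_converge[OF assms]) blast
  then have "midpoint_chain \<sigma> n x y (map L [0..<n + 1])"
    by (rule midpoint_relaxation_limit_chain[OF assms])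
  then show ?thesis
    using midpoint_chain_unique by blast
qed

end

section \<open>The subdivided bicombing\<close>

text \<open>The \<open>min\<close> puts \<open>t = 1\<close> on the last segment instead of a nonexistent \<open>n\<close>-th one.\<close>
definition broken_geodesic :: "('a \<Rightarrow> 'a \<Rightarrow> real \<Rightarrow> 'a) \<Rightarrow> nat \<Rightarrow> 'a list \<Rightarrow> real \<Rightarrow> 'a" where
  "broken_geodesic \<sigma> n p t =
     (let i = min (n - 1) (nat \<lfloor>t * n\<rfloor>) in \<sigma> (p ! i) (p ! (i + 1)) (t * n - i))"

definition subdivided_bicombing :: "('a \<Rightarrow> 'a \<Rightarrow> real \<Rightarrow> 'a) \<Rightarrow> nat \<Rightarrow> 'a \<Rightarrow> 'a \<Rightarrow> real \<Rightarrow> 'a" where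
  "subdivided_bicombing \<sigma> n x y = broken_geodesic \<sigma> n (THE p. midpoint_chain \<sigma> n x y p)"

context conical_bicombing_space
begin

lemma broken_geodesic_segment:
  assumes "i < n" "l \<in> {0..1}"
  shows "broken_geodesic \<sigma> n p ((real i + l) / n) = \<sigma> (p ! i) (p ! (i + 1)) l"
proof -
  have tn: "(real i + l) / n * n = real i + l"
    using assms(1) by simp
  consider "l < 1" | "l = 1" "i + 1 < n" | "l = 1" "i + 1 = n"
    using assms by fastforce
  then show ?thesis
  proof cases
    case 1
    then have "\<lfloor>real i + l\<rfloor> = int i"
      using assms(2) by (intro floor_unique) auto
    then show ?thesis
      using assms(1) unfolding broken_geodesic_def tn by simp
  next
    case 2
    then show ?thesis
      unfolding broken_geodesic_def tn by (simp add: nat_add_distrib)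
  next
    case 3
    then have "n - 1 = i" "real n = real i + 1"
      by auto
    with 3 show ?thesis
      unfolding broken_geodesic_def tn by (simp add: nat_add_distrib)
  qed
qed

lemma broken_geodesic_lipschitz:
  assumes "0 < n" and steps: "\<And>i. i < n \<Longrightarrow> dist (p ! i) (p ! (i + 1)) \<le> \<delta>"
  shows "(n * \<delta>)-lipschitz_on {0..1} (broken_geodesic \<sigma> n p)"
proof -
  have "0 \<le> \<delta>"
    using steps[OF \<open>0 < n\<close>] zero_le_dist order.trans by blast
  have "(n * \<delta>)-lipschitz_on {real k / n..real (Suc k) / n} (broken_geodesic \<sigma> n p)"
    if "k < n" for k
  proof (rule lipschitz_onI)
    fix s t
    assume "s \<in> {real k / n..real (Suc k) / n}" "t \<in> {real k / n..real (Suc k) / n}"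
    moreover define l m where "l = s * n - k" and "m = t * n - k"
    ultimately have lm: "l \<in> {0..1}" "m \<in> {0..1}"
      using \<open>0 < n\<close> by (auto simp: le_divide_eq divide_le_eq)
    have "s = (real k + l) / n" "t = (real k + m) / n"
      using \<open>0 < n\<close> by (simp_all add: l_def m_def)
    then have "dist (broken_geodesic \<sigma> n p s) (broken_geodesic \<sigma> n p t)
        = dist (\<sigma> (p ! k) (p ! (k + 1)) l) (\<sigma> (p ! k) (p ! (k + 1)) m)"
      using broken_geodesic_segment[OF that] lm by simp
    also have "\<dots> = \<bar>l - m\<bar> * dist (p ! k) (p ! (k + 1))"
      using lm by (rule dist_along)
    also have "\<dots> \<le> \<bar>l - m\<bar> * \<delta>"
      using steps[OF that] by (intro mult_left_mono) auto
    also have "\<dots> = n * \<delta> * dist s t"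
      by (simp add: l_def m_def dist_real_def abs_mult left_diff_distrib[symmetric] mult_ac)
    finally show "dist (broken_geodesic \<sigma> n p s) (broken_geodesic \<sigma> n p t) \<le> n * \<delta> * dist s t" .
  qed (use \<open>0 \<le> \<delta>\<close> in simp)
  from lipschitz_on_subdivision[of "n * \<delta>" n "\<lambda>k. real k / n", OF _ this]
  show ?thesis
    using \<open>0 < n\<close> \<open>0 \<le> \<delta>\<close> by simp
qed

end

context proper_conical_bicombing_space
begin

lemma the_midpoint_chain:
  assumes "0 < n"
  shows "midpoint_chain \<sigma> n x y (THE p. midpoint_chain \<sigma> n x y p)"
  using ex1_midpoint_chain[OF assms] by (rule theI')

lemma subdivided_bicombing_geodesic:
  assumes "0 < n"
  shows "geodesic01 (subdivided_bicombing \<sigma> n x y) x y"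
proof -
  define p where "p = (THE p. midpoint_chain \<sigma> n x y p)"
  have p: "midpoint_chain \<sigma> n x y p"
    unfolding p_def using assms by (rule the_midpoint_chain)
  have "subdivided_bicombing \<sigma> n x y 0 = x"
    using broken_geodesic_segment[of 0 n 0 p] assms midpoint_chainD(2)[OF p]
    by (simp add: subdivided_bicombing_def p_def)
  moreover have "subdivided_bicombing \<sigma> n x y 1 = y"
    using broken_geodesic_segment[of "n - 1" n 1 p] assms midpoint_chainD(3)[OF p]
    by (simp add: subdivided_bicombing_def p_def of_nat_diff)
  moreover have "(n * (dist x y / n))-lipschitz_on {0..1} (subdivided_bicombing \<sigma> n x y)"
    unfolding subdivided_bicombing_def p_def[symmetric]
    using assms midpoint_chain_step_dist[OF p] by (intro broken_geodesic_lipschitz) auto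
  ultimately show ?thesis
    using assms by (intro geodesic01_if_lipschitz) auto
qed

lemma conical_bicombing_subdivided:
  assumes "0 < n"
  shows "conical_bicombing (subdivided_bicombing \<sigma> n)"
  unfolding conical_bicombing_def bicombing_def
proof (intro conjI allI ballI subdivided_bicombing_geodesic[OF assms])
  fix x y x' y' and t :: real
  assume "t \<in> {0..1}"
  with assms obtain i l where il: "i < n" "l \<in> {0..1}" "t = (real i + l) / n"
    by (rule unit_interval_segment)
  define p where "p = (THE p. midpoint_chain \<sigma> n x y p)"
  define q where "q = (THE p. midpoint_chain \<sigma> n x' y' p)"
  have p: "midpoint_chain \<sigma> n x y p" and q: "midpoint_chain \<sigma> n x' y' q"
    unfolding p_def q_def using assms by (simp_all add: the_midpoint_chain)
  have "dist (subdivided_bicombing \<sigma> n x y t) (subdivided_bicombing \<sigma> n x' y' t)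
      = dist (\<sigma> (p ! i) (p ! (i + 1)) l) (\<sigma> (q ! i) (q ! (i + 1)) l)"
    unfolding subdivided_bicombing_def p_def q_def il(3) using il by (simp add: broken_geodesic_segment)
  also have "\<dots> \<le> (1 - l) * dist (p ! i) (q ! i) + l * dist (p ! (i + 1)) (q ! (i + 1))"
    using il(2) by (rule conical)
  also have "\<dots> \<le> (1 - l) * ((1 - i / n) * dist x x' + (i / n) * dist y y')
      + l * ((1 - (i + 1) / n) * dist x x' + ((i + 1) / n) * dist y y')"
    using il midpoint_chain_dist_le[OF p q, of i] midpoint_chain_dist_le[OF p q, of "i + 1"]
    by (intro add_mono mult_left_mono) auto
  also have "\<dots> = (1 - ((1 - l) * (i / n) + l * ((i + 1) / n))) * dist x x'
      + ((1 - l) * (i / n) + l * ((i + 1) / n)) * dist y y'"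
    by (simp only: algebra_simps)
  also have "\<dots> = (1 - t) * dist x x' + t * dist y y'"
    unfolding interpolate_grid_points il(3) ..
  finally show "dist (subdivided_bicombing \<sigma> n x y t) (subdivided_bicombing \<sigma> n x' y' t)
      \<le> (1 - t) * dist x x' + t * dist y y'" .
qed

end

theorem lemma5p2:
  fixes \<sigma> :: "'a::metric_space \<Rightarrow> 'a \<Rightarrow> real \<Rightarrow> 'a"
  assumes "proper_metric TYPE('a)"
    and "conical_bicombing \<sigma>"
    and "n \<ge> 1"
  shows "(\<forall>x y. \<exists>!p. midpoint_chain \<sigma> n x y p) \<and>
         (\<exists>\<sigma>n :: 'a \<Rightarrow> 'a \<Rightarrow> real \<Rightarrow> 'a. conical_bicombing \<sigma>n \<and>
            (\<forall>x y. \<forall>l\<in>{0..1}. \<forall>i<n.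
               \<sigma>n x y ((1 - l) * (real i / real n) + l * (real (i + 1) / real n)) =
               \<sigma> ((THE p. midpoint_chain \<sigma> n x y p) ! i)
                 ((THE p. midpoint_chain \<sigma> n x y p) ! (i + 1)) l))"
proof -
  interpret proper_conical_bicombing_space \<sigma>
    using assms(1,2) by unfold_locales
  have "0 < n"
    using assms(3) by simp
  show ?thesis
  proof (intro conjI allI exI[of _ "subdivided_bicombing \<sigma> n"] ballI impI)
    show "\<exists>!p. midpoint_chain \<sigma> n x y p" for x y
      using \<open>0 < n\<close> by (rule ex1_midpoint_chain)
    show "conical_bicombing (subdivided_bicombing \<sigma> n)"
      using \<open>0 < n\<close> by (rule conical_bicombing_subdivided)
    fix x y i and l :: real
    assume "l \<in> {0..1}" "i < n"
    show "subdivided_bicombing \<sigma> n x y ((1 - l) * (real i / real n) + l * (real (i + 1) / real n))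
      = \<sigma> ((THE p. midpoint_chain \<sigma> n x y p) ! i) ((THE p. midpoint_chain \<sigma> n x y p) ! (i + 1)) l"
      unfolding interpolate_grid_points subdivided_bicombing_def
      by (rule broken_geodesic_segment[OF \<open>i < n\<close> \<open>l \<in> {0..1}\<close>])
  qed
qed

end
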